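(* For any $(\boldsymbol{x},\boldsymbol{v}),(\boldsymbol{x}^\star,\boldsymbol{v}^\star)\in\mathbb{T}^3\times\mathbb{S}^2$ there exist $N\in\mathbb{N}$ and $\underline{\omega}^N=(\omega_1,\dots,\omega_N)\in\Omega_0^N$ such that $$f_{\underline{\omega}^N}(\boldsymbol{x})=\boldsymbol{x}^\star\qquad\text{and}\qquad \frac{D_{\boldsymbol{x}}f_{\underline{\omega}^N}\boldsymbol{v}}{|D_{\boldsymbol{x}}f_{\underline{\omega}^N}\boldsymbol{v}|}=\boldsymbol{v}^\star.$$
   Context: $\mathbb{T}^3=\mathbb{R}^3/(2\pi\mathbb{Z})^3$ with points $\boldsymbol{x}=(x,y,z)$; $\mathbb{S}^2\subset\mathbb{R}^3$ is the unit sphere. Fix $U>0$ and let $\Omega_0=[-U,U]^3\times[0,2\pi)^3$, with elements $\omega=(\mathsf{A},\mathsf{B},\mathsf{C},\alpha,\beta,\gamma)$. Define maps of $\mathbb{T}^3$: $f_{(\mathsf{A},\alpha)}(x,y,z)=(x+\mathsf{A}\sin(z+\alpha),\ y+\mathsf{A}\cos(z+\alpha),\ z)$, $f_{(\mathsf{B},\beta)}(x,y,z)=(x,\ y+\mathsf{B}\sin(x+\beta),\ z+\mathsf{B}\cos(x+\beta))$, $f_{(\mathsf{C},\gamma)}(x,y,z)=(x+\mathsf{C}\cos(y+\gamma),\ y,\ z+\mathsf{C}\sin(y+\gamma))$, and $f_\omega=f_{(\mathsf{C},\gamma)}\circ f_{(\mathsf{B},\beta)}\circ f_{(\mathsf{A},\alpha)}$.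 For $\underline{\omega}^N=(\omega_1,\dots,\omega_N)\in\Omega_0^N$, $f_{\underline{\omega}^N}=f_{\omega_N}\circ\cdots\circ f_{\omega_1}$, and $D_{\boldsymbol{x}}f_{\underline{\omega}^N}$ is its Jacobian matrix at $\boldsymbol{x}$. *)

theory Defs
  imports "HOL-Analysis.Analysis"
begin

text \<open>Points of the torus T^3 = R^3/(2 pi Z)^3 are represented by lifts in real^3;
  the maps below are the natural lifts of the torus maps.\<close>

definition torus_eq :: "real^3 \<Rightarrow> real^3 \<Rightarrow> bool" where
  "torus_eq p q \<longleftrightarrow> (\<forall>i. \<exists>k::int. p $ i - q $ i = 2 * pi * of_int k)"

definition fA :: "real \<Rightarrow> real \<Rightarrow> real^3 \<Rightarrow> real^3" where
  "fA A \<alpha> p = vector [p$1 + A * sin (p$3 + \<alpha>), p$2 + A * cos (p$3 + \<alpha>), p$3]"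

definition fB :: "real \<Rightarrow> real \<Rightarrow> real^3 \<Rightarrow> real^3" where
  "fB B \<beta> p = vector [p$1, p$2 + B * sin (p$1 + \<beta>), p$3 + B * cos (p$1 + \<beta>)]"

definition fC :: "real \<Rightarrow> real \<Rightarrow> real^3 \<Rightarrow> real^3" where
  "fC C \<gamma> p = vector [p$1 + C * cos (p$2 + \<gamma>), p$2, p$3 + C * sin (p$2 + \<gamma>)]"

type_synonym param = "real \<times> real \<times> real \<times> real \<times> real \<times> real"

fun f_omega :: "param \<Rightarrow> real^3 \<Rightarrow> real^3" where
  "f_omega (A, B, C, \<alpha>, \<beta>, \<gamma>) = fC C \<gamma> \<circ> fB B \<beta> \<circ> fA A \<alpha>"

definition Omega0 :: "real \<Rightarrow> param set" where
  "Omega0 U = {(A, B, C, \<alpha>, \<beta>, \<gamma>). \<bar>A\<bar> \<le> U \<and> \<bar>B\<bar> \<le> U \<and> \<bar>C\<bar> \<le> U \<and>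
      0 \<le> \<alpha> \<and> \<alpha> < 2 * pi \<and> 0 \<le> \<beta> \<and> \<beta> < 2 * pi \<and> 0 \<le> \<gamma> \<and> \<gamma> < 2 * pi}"

text \<open>f_{[w1,...,wN]} = f_{wN} o ... o f_{w1}\<close>
definition f_seq :: "param list \<Rightarrow> real^3 \<Rightarrow> real^3" where
  "f_seq ws = foldl (\<lambda>g w. f_omega w \<circ> g) id ws"

end

theory Submission
  imports Defs
begin

(* With only one of A, B, C nonzero, f_omega is a shear of two coordinates driven by the
   third one, and a suitable phase realises any displacement (d1, d2) with |d1| + |d2| <= U.
   Its derivative is v |-> v + v_k (d2, -d1) on the two moved coordinates: it depends on the
   displacement only, not on the base point.  Iterating small equal steps therefore realises
   an arbitrary displacement t while adding v_k (t2, -t1) to the tangent vector.  If v_k /= 0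
   this sets the other two components of v at will; if v_k = 0 it moves the point and leaves v
   unchanged.  Hence any nonzero tangent vector can be turned into any other by a translation
   independent of the base point, and e_2 can be carried between any two points unchanged.
   Chaining v -> e_2, a translation of e_2, and e_2 -> v* hits x* and v* exactly. *)

lemma polar_phase:
  fixes d1 d2 z :: real
  obtains r \<alpha> where "\<bar>r\<bar> \<le> \<bar>d1\<bar> + \<bar>d2\<bar>" "0 \<le> \<alpha>" "\<alpha> < 2 * pi"
    "r * sin (z + \<alpha>) = d1" "r * cos (z + \<alpha>) = d2"
proof -
  define c where "c = Complex d2 d1 * cis (- z)"
  define r \<alpha> where "r = cmod c" and "\<alpha> = Arg2pi c"
  have r_cos: "r * cos \<alpha> = d2 * cos z + d1 * sin z"
    and r_sin: "r * sin \<alpha> = d1 * cos z - d2 * sin z"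
    using cos_Arg2pi[of c] sin_Arg2pi[of c] by (simp_all add: r_def \<alpha>_def c_def)
  have "r * sin (z + \<alpha>) = sin z * (r * cos \<alpha>) + cos z * (r * sin \<alpha>)"
    by (simp add: sin_add algebra_simps)
  also have "\<dots> = d1 * ((sin z)\<^sup>2 + (cos z)\<^sup>2)"
    unfolding r_cos r_sin by algebra
  finally have sin_eq: "r * sin (z + \<alpha>) = d1" by simp
  have "r * cos (z + \<alpha>) = cos z * (r * cos \<alpha>) - sin z * (r * sin \<alpha>)"
    by (simp add: cos_add algebra_simps)
  also have "\<dots> = d2 * ((sin z)\<^sup>2 + (cos z)\<^sup>2)"
    unfolding r_cos r_sin by algebra
  finally have cos_eq: "r * cos (z + \<alpha>) = d2" by simp
  have "\<bar>r\<bar> \<le> \<bar>d1\<bar> + \<bar>d2\<bar>"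
    using cmod_le[of "Complex d2 d1"] by (simp add: r_def c_def norm_mult)
  moreover have "0 \<le> \<alpha>" "\<alpha> < 2 * pi"
    using Arg2pi[of c] by (simp_all add: \<alpha>_def)
  ultimately show ?thesis
    using sin_eq cos_eq by (rule that)
qed

lemma axis_component: "axis i x $ j = (if j = i then x else 0)"
  by (simp add: axis_def)

definition shear_map :: "3 \<Rightarrow> 3 \<Rightarrow> 3 \<Rightarrow> real \<Rightarrow> real \<Rightarrow> real^3 \<Rightarrow> real^3" where
  "shear_map i j k a \<theta> p =
     p + (a * sin (p$k + \<theta>)) *\<^sub>R axis i 1 + (a * cos (p$k + \<theta>)) *\<^sub>R axis j 1"

lemma has_derivative_shear_map:
  "(shear_map i j k a \<theta> has_derivative
     (\<lambda>h. h + (a * cos (p$k + \<theta>) * h$k) *\<^sub>R axis i 1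
            - (a * sin (p$k + \<theta>) * h$k) *\<^sub>R axis j 1)) (at p)"
  unfolding shear_map_def [abs_def]
  by (rule derivative_eq_intros bounded_linear_imp_has_derivative[OF bounded_linear_vec_nth] refl)+
     (simp add: algebra_simps)

definition cyclic_triples :: "(3 \<times> 3 \<times> 3) set" where
  "cyclic_triples = {(1, 2, 3), (2, 3, 1), (3, 1, 2)}"
lemma cyclic_triples_distinct:
  "(i, j, k) \<in> cyclic_triples \<Longrightarrow> i \<noteq> k \<and> j \<noteq> k"
  unfolding cyclic_triples_def by (elim insertE emptyE) simp_all

lemma cyclic_triples_ex: "\<exists>i j. (i, j, k) \<in> cyclic_triples"
  using exhaust_3[of k] unfolding cyclic_triples_def by blast

lemma f_omega_single_shear:
  "f_omega (a, 0, 0, \<theta>, 0, 0) = shear_map 1 2 3 a \<theta>"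
  "f_omega (0, a, 0, 0, \<theta>, 0) = shear_map 2 3 1 a \<theta>"
  "f_omega (0, 0, a, 0, 0, \<theta>) = shear_map 3 1 2 a \<theta>"
  by (simp_all add: fun_eq_iff fA_def fB_def fC_def shear_map_def vec_eq_iff forall_3
      axis_component)

lemma shear_map_in_Omega0:
  assumes "(i, j, k) \<in> cyclic_triples" "\<bar>a\<bar> \<le> U" "0 \<le> \<theta>" "\<theta> < 2 * pi"
  shows "\<exists>\<omega> \<in> Omega0 U. f_omega \<omega> = shear_map i j k a \<theta>"
proof -
  have "(a, 0, 0, \<theta>, 0, 0) \<in> Omega0 U" "(0, a, 0, 0, \<theta>, 0) \<in> Omega0 U"
    "(0, 0, a, 0, 0, \<theta>) \<in> Omega0 U"
    using assms(2-4) by (auto simp: Omega0_def)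
  with assms(1) f_omega_single_shear[of a \<theta>] show ?thesis
    unfolding cyclic_triples_def by (auto simp del: f_omega.simps)
qed

lemma f_seq_Nil [simp]: "f_seq [] = id"
  by (simp add: f_seq_def)

lemma f_seq_single [simp]: "f_seq [\<omega>] = f_omega \<omega>"
  by (simp add: f_seq_def)

lemma f_seq_append: "f_seq (ws @ ws') = f_seq ws' \<circ> f_seq ws"
  by (induction ws' rule: rev_induct) (simp_all add: f_seq_def o_assoc flip: append_assoc)

definition reachable :: "real \<Rightarrow> real^3 \<Rightarrow> real^3 \<Rightarrow> real^3 \<Rightarrow> real^3 \<Rightarrow> bool" where
  "reachable U p v q w \<longleftrightarrow>
     (\<exists>ws L. set ws \<subseteq> Omega0 U \<and> f_seq ws p = q \<and>
        (f_seq ws has_derivative L) (at p) \<and> L v = w)"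

lemma reachable_refl: "reachable U p v p v"
  unfolding reachable_def by (intro exI[of _ "[]"] exI[of _ id]) (simp add: has_derivative_id)

lemma reachable_trans:
  assumes "reachable U p u q v" "reachable U q v r w"
  shows "reachable U p u r w"
proof -
  obtain ws L where ws: "set ws \<subseteq> Omega0 U" "f_seq ws p = q"
      "(f_seq ws has_derivative L) (at p)" "L u = v"
    using assms(1) unfolding reachable_def by blast
  obtain ws' L' where ws': "set ws' \<subseteq> Omega0 U" "f_seq ws' q = r"
      "(f_seq ws' has_derivative L') (at q)" "L' v = w"
    using assms(2) unfolding reachable_def by blast
  have "(f_seq ws' \<circ> f_seq ws has_derivative L' \<circ> L) (at p)"
    using ws ws' by (intro diff_chain_at) auto
  with ws ws' show ?thesis
    unfolding reachable_def
    by (intro exI[of _ "ws @ ws'"] exI[of _ "L' \<circ> L"]) (auto simp: f_seq_append)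
qed

lemma reachable_shear_step:
  assumes "(i, j, k) \<in> cyclic_triples" "\<bar>d1\<bar> + \<bar>d2\<bar> \<le> U"
  shows "reachable U p v (p + d1 *\<^sub>R axis i 1 + d2 *\<^sub>R axis j 1)
           (v + v$k *\<^sub>R (d2 *\<^sub>R axis i 1 - d1 *\<^sub>R axis j 1))"
proof -
  obtain a \<theta> where a: "\<bar>a\<bar> \<le> \<bar>d1\<bar> + \<bar>d2\<bar>" "0 \<le> \<theta>" "\<theta> < 2 * pi"
      and sin_eq: "a * sin (p$k + \<theta>) = d1" and cos_eq: "a * cos (p$k + \<theta>) = d2"
    by (rule polar_phase)
  have "\<bar>a\<bar> \<le> U"
    using a(1) assms(2) by linarith
  then obtain \<omega> where \<omega>: "\<omega> \<in> Omega0 U" "f_omega \<omega> = shear_map i j k a \<theta>"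
    using shear_map_in_Omega0[OF assms(1) _ a(2,3)] by blast
  define L where "L h = h + (d2 * h$k) *\<^sub>R axis i 1 - (d1 * h$k) *\<^sub>R axis j 1" for h :: "real^3"
  have "(f_seq [\<omega>] has_derivative L) (at p)"
    using has_derivative_shear_map[of i j k a \<theta> p]
    by (simp add: \<omega>(2) sin_eq cos_eq L_def [abs_def])
  moreover have "f_seq [\<omega>] p = p + d1 *\<^sub>R axis i 1 + d2 *\<^sub>R axis j 1"
    by (simp add: \<omega>(2) shear_map_def sin_eq cos_eq)
  ultimately show ?thesis
    unfolding reachable_def using \<omega>(1)
    by (intro exI[of _ "[\<omega>]"] exI[of _ L]) (simp add: L_def algebra_simps)
qed

lemma reachable_iterate:
  assumes step: "\<And>q w. reachable U q w (q + \<delta>) (w + w$k *\<^sub>R \<eta>)" and "\<eta>$k = 0"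
  shows "reachable U p v (p + real n *\<^sub>R \<delta>) (v + (real n * v$k) *\<^sub>R \<eta>)"
proof (induction n)
  case 0
  show ?case by (simp add: reachable_refl)
next
  case (Suc n)
  let ?w = "v + (real n * v$k) *\<^sub>R \<eta>"
  from reachable_trans[OF Suc step[of "p + real n *\<^sub>R \<delta>" ?w]] show ?case
    using \<open>\<eta>$k = 0\<close> by (simp add: algebra_simps)
qed

lemma reachable_shear:
  assumes "(i, j, k) \<in> cyclic_triples" "U > 0"
  shows "reachable U p v (p + t1 *\<^sub>R axis i 1 + t2 *\<^sub>R axis j 1)
           (v + v$k *\<^sub>R (t2 *\<^sub>R axis i 1 - t1 *\<^sub>R axis j 1))"
proof -
  obtain n :: nat where n: "(\<bar>t1\<bar> + \<bar>t2\<bar>) / U < real n"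
    using reals_Archimedean2 by blast
  then have "n > 0"
    using assms(2) by (auto intro!: Nat.gr0I simp: divide_less_0_iff)
  define \<delta> :: "real^3" where "\<delta> = (t1 / n) *\<^sub>R axis i 1 + (t2 / n) *\<^sub>R axis j 1"
  define \<eta> :: "real^3" where "\<eta> = (t2 / n) *\<^sub>R axis i 1 - (t1 / n) *\<^sub>R axis j 1"
  have "\<bar>t1 / n\<bar> + \<bar>t2 / n\<bar> \<le> U"
    using n \<open>n > 0\<close> assms(2) by (simp add: field_simps)
  then have "reachable U q w (q + \<delta>) (w + w$k *\<^sub>R \<eta>)" for q w
    unfolding \<delta>_def \<eta>_def using reachable_shear_step[OF assms(1)] by (simp add: add.assoc)
  moreover have "\<eta>$k = 0"
    using cyclic_triples_distinct[OF assms(1)] by (auto simp: \<eta>_def axis_component)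
  ultimately have "reachable U p v (p + real n *\<^sub>R \<delta>) (v + (real n * v$k) *\<^sub>R \<eta>)"
    by (rule reachable_iterate)
  moreover have "real n *\<^sub>R \<delta> = t1 *\<^sub>R axis i 1 + t2 *\<^sub>R axis j 1"
    "(real n * v$k) *\<^sub>R \<eta> = v$k *\<^sub>R (t2 *\<^sub>R axis i 1 - t1 *\<^sub>R axis j 1)"
    using \<open>n > 0\<close> by (simp_all add: \<delta>_def \<eta>_def scaleR_add_right scaleR_diff_right)
  ultimately show ?thesis
    by (simp add: add.assoc)
qed

definition steerable :: "real \<Rightarrow> real^3 \<Rightarrow> real^3 \<Rightarrow> bool" where
  "steerable U v w \<longleftrightarrow> (\<exists>\<delta>. \<forall>p. reachable U p v (p + \<delta>) w)"

lemma steerable_trans: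
  assumes "steerable U u v" "steerable U v w"
  shows "steerable U u w"
proof -
  obtain \<delta> where \<delta>: "\<And>p. reachable U p u (p + \<delta>) v"
    using assms(1) unfolding steerable_def by blast
  obtain \<delta>' where \<delta>': "\<And>p. reachable U p v (p + \<delta>') w"
    using assms(2) unfolding steerable_def by blast
  have "reachable U p u (p + (\<delta> + \<delta>')) w" for p
    using reachable_trans[OF \<delta>[of p] \<delta>'[of "p + \<delta>"]] by (simp add: add.assoc)
  then show ?thesis
    unfolding steerable_def by blast
qed

lemma steerable_fixing_coordinate:
  assumes "U > 0" "v$k \<noteq> 0" "w$k = v$k"
  shows "steerable U v w"
proof -
  obtain i j where ijk: "(i, j, k) \<in> cyclic_triples"
    using cyclic_triples_ex by blast
  define t1 t2 where "t1 = (v$j - w$j) / v$k" and "t2 = (w$i - v$i) / v$k"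
  have "v + v$k *\<^sub>R (t2 *\<^sub>R axis i 1 - t1 *\<^sub>R axis j 1) = w"
    using ijk assms(2,3) unfolding cyclic_triples_def
    by (auto simp: t1_def t2_def vec_eq_iff forall_3 axis_component)
  then have "reachable U p v (p + (t1 *\<^sub>R axis i 1 + t2 *\<^sub>R axis j 1)) w" for p
    using reachable_shear[OF ijk assms(1), of p v t1 t2] by (simp add: add.assoc)
  then show ?thesis
    unfolding steerable_def by blast
qed

lemma steerable_via_coordinates:
  assumes "U > 0" "v$k \<noteq> 0" "w$l \<noteq> 0" "k \<noteq> l"
  shows "steerable U v w"
proof -
  define u :: "real^3" where "u = (\<chi> m. if m = k then v$k else w$m)"
  have "steerable U v u"
    using assms(1,2) by (rule steerable_fixing_coordinate) (simp add: u_def)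
  moreover have "steerable U u w"
    using assms(1) by (rule steerable_fixing_coordinate[of U u l])
      (use assms(3,4) in \<open>simp_all add: u_def\<close>)
  ultimately show ?thesis
    by (rule steerable_trans)
qed

lemma steerable_nonzero:
  assumes "U > 0" "v \<noteq> 0" "w \<noteq> 0"
  shows "steerable U v w"
proof -
  obtain k l where "v$k \<noteq> 0" "w$l \<noteq> 0"
    using assms(2,3) by (metis vec_eq_iff zero_index)
  moreover obtain m :: 3 where "m \<noteq> k" "m \<noteq> l"
    using exhaust_3[of k] exhaust_3[of l] by (auto intro: that[of 1] that[of 2] that[of 3])
  ultimately show ?thesis
    using steerable_via_coordinates[OF assms(1), of v k "axis m 1" m]
      steerable_via_coordinates[OF assms(1), of "axis m 1" m w l]
    by (metis axis_nth steerable_trans zero_neq_one)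
qed

lemma reachable_translating_axis2:
  assumes "U > 0"
  shows "reachable U p (axis 2 1) q (axis 2 1)"
proof -
  define r where "r = p + (q$1 - p$1) *\<^sub>R axis 1 1 + (q$2 - p$2) *\<^sub>R axis 2 1"
  have cyc: "(1, 2, 3) \<in> cyclic_triples" "(2, 3, 1) \<in> cyclic_triples"
    by (simp_all add: cyclic_triples_def)
  have "reachable U p (axis 2 1) r (axis 2 1)"
    using reachable_shear[OF cyc(1) assms, of p "axis 2 1" "q$1 - p$1" "q$2 - p$2"]
    by (simp add: r_def axis_component)
  moreover have
    "reachable U r (axis 2 1) (r + 0 *\<^sub>R axis 2 1 + (q$3 - p$3) *\<^sub>R axis 3 1) (axis 2 1)"
    using reachable_shear[OF cyc(2) assms, of r "axis 2 1" 0 "q$3 - p$3"]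
    by (simp add: axis_component)
  moreover have "r + 0 *\<^sub>R axis 2 1 + (q$3 - p$3) *\<^sub>R axis 3 1 = q"
    by (simp add: r_def vec_eq_iff forall_3 axis_component)
  ultimately show ?thesis
    by (metis reachable_trans)
qed

lemma reachable_nonempty_sequence:
  assumes "reachable U p v q w" "U \<ge> 0"
  shows "\<exists>ws. ws \<noteq> [] \<and> set ws \<subseteq> Omega0 U \<and> f_seq ws p = q \<and>
           frechet_derivative (f_seq ws) (at p) v = w"
proof -
  obtain ws L where ws: "set ws \<subseteq> Omega0 U" "f_seq ws p = q"
      "(f_seq ws has_derivative L) (at p)" "L v = w"
    using assms(1) unfolding reachable_def by blast
  define \<omega>\<^sub>0 :: param where "\<omega>\<^sub>0 = (0, 0, 0, 0, 0, 0)"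
  have "f_omega \<omega>\<^sub>0 = id"
    using f_omega_single_shear(1)[of 0 0]
    by (simp add: \<omega>\<^sub>0_def shear_map_def fun_eq_iff del: f_omega.simps)
  then have "f_seq (\<omega>\<^sub>0 # ws) = f_seq ws"
    using f_seq_append[of "[\<omega>\<^sub>0]" ws] by simp
  moreover have "\<omega>\<^sub>0 \<in> Omega0 U"
    using assms(2) by (simp add: \<omega>\<^sub>0_def Omega0_def)
  ultimately show ?thesis
    using ws frechet_derivative_at[OF ws(3)]
    by (intro exI[of _ "\<omega>\<^sub>0 # ws"]) auto
qed

theorem proposition3p2:
  fixes U :: real and x v xs vs :: "real^3"
  assumes "U > 0" and "norm v = 1" and "norm vs = 1"
  shows "\<exists>ws. ws \<noteq> [] \<and> set ws \<subseteq> Omega0 U \<and>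
           torus_eq (f_seq ws x) xs \<and>
           (let w = frechet_derivative (f_seq ws) (at x) v in (1 / norm w) *\<^sub>R w = vs)"
proof -
  let ?e = "axis 2 1 :: real^3"
  have "v \<noteq> 0" "vs \<noteq> 0" "?e \<noteq> 0"
    using assms(2,3) by auto
  then obtain \<delta> \<delta>' where \<delta>: "\<And>p. reachable U p v (p + \<delta>) ?e"
      and \<delta>': "\<And>p. reachable U p ?e (p + \<delta>') vs"
    using steerable_nonzero[OF assms(1)] unfolding steerable_def by metis
  have "reachable U x v (xs - \<delta>') ?e"
    using reachable_trans[OF \<delta>[of x] reachable_translating_axis2[OF assms(1)]] .
  from reachable_trans[OF this \<delta>'] have "reachable U x v xs vs"
    by simp
  then obtain ws where "ws \<noteq> []" "set ws \<subseteq> Omega0 U" "f_seq ws x = xs"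
      "frechet_derivative (f_seq ws) (at x) v = vs"
    using reachable_nonempty_sequence assms(1) by (metis less_imp_le)
  moreover have "torus_eq xs xs"
    unfolding torus_eq_def by (auto intro: exI[of _ 0])
  ultimately show ?thesis
    using assms(3) by (auto simp: Let_def)
qed

end
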